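(* For every integer $n\ge 1$ and every real $x>0$, \[ \left[\frac{1}{n}\left(\frac{x}{(n-1)!}-\left(\left(\frac{(n-1)!}{x}\right)^{1/n}+1\right)^{-n}\right)\right]^{-\frac{1}{n+1}} <\left((-1)^{n-1}\psi^{(n)}\right)^{-1}(x) <\left(\frac{(n-1)!}{x}\right)^{1/n}+\frac{1}{2}. \]
   Context: $\Gamma$ is the Euler gamma function and $\psi=\Gamma'/\Gamma$ is the digamma function; $\psi^{(n)}$ denotes its $n$-th derivative. For each integer $n\ge1$ the map $t\mapsto(-1)^{n-1}\psi^{(n)}(t)=n!\sum_{k\ge0}(t+k)^{-(n+1)}$ is a strictly decreasing bijection from $(0,\infty)$ onto $(0,\infty)$, and $\left((-1)^{n-1}\psi^{(n)}\right)^{-1}$ denotes its inverse function. *)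

theory Defs
  imports "HOL-Analysis.Analysis"
begin

definition polygamma_inv :: "nat \<Rightarrow> real \<Rightarrow> real" where
  "polygamma_inv n = the_inv_into {0<..} (\<lambda>t::real. (-1) ^ (n - 1) * Polygamma n t)"

end

theory Submission
  imports Defs
begin

text \<open>The function \<open>F(t) = (-1)^(n-1) \<psi>^(n)(t) = n! \<Sum>\<^sub>k (t + k)^-(n+1)\<close> is strictly
  decreasing, so it suffices to compare \<open>F\<close> with \<open>x\<close> at both bounds. With
  \<open>s = ((n-1)!/x)^(1/n)\<close> we have \<open>x/n! = s^-n/n = \<Sum>\<^sub>k \<integral>[s+k, s+k+1] u^-(n+1) du\<close>.
  Upper bound: the midpoint rule underestimates the integral of the convex function
  \<open>u^-(n+1)\<close>, hence \<open>F(s + 1/2) < x\<close>.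
  Lower bound: the left-hand side is \<open>M(s)\<close>, where \<open>M(a)\<close> is the power mean of exponent
  \<open>-(n+1)\<close> of the uniform distribution on \<open>[a, a+1]\<close>. Log-convexity of
  \<open>m \<mapsto> \<integral>[a, a+1] u^-m du\<close> makes \<open>M(a) - a\<close> strictly increasing, so \<open>M(s) + k \<le> M(s + k)\<close>,
  and comparing the two series termwise gives \<open>F(M(s)) > x\<close>.\<close>

lemma has_real_derivative_inverse_power:
  assumes "(f has_real_derivative f') (at x within S)" "f x \<noteq> 0"
  shows "((\<lambda>u. inverse (f u ^ k)) has_real_derivative - (real k * inverse (f x ^ Suc k) * f'))
    (at x within S)"
proof -
  have "inverse (f x ^ k) * (real k * f x ^ (k - 1) * f') * inverse (f x ^ k)
      = real k * inverse (f x ^ Suc k) * f'"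
    using assms by (cases k) (simp_all add: field_simps)
  then show ?thesis
    using assms by (intro DERIV_cong[OF DERIV_inverse_fun[OF DERIV_power]]) auto
qed

lemma inverse_power_midpoint_less:
  fixes c h :: real
  assumes "0 < h" "h < c" "m \<ge> 1"
  shows "2 * inverse (c ^ m) < inverse ((c - h) ^ m) + inverse ((c + h) ^ m)"
proof -
  define A B q where "A = inverse ((c - h) ^ m)" "B = inverse ((c + h) ^ m)" "q = inverse (c ^ m)"
  have pos: "A > 0" "B > 0" "q > 0" using assms unfolding A_B_q_def by auto
  have "(c - h) * (c + h) < c * c" using assms by (simp add: algebra_simps)
  then have "((c - h) * (c + h)) ^ m < (c * c) ^ m"
    using assms by (intro power_strict_mono) auto
  then have "q * q < A * B"
    using assms unfolding A_B_q_def
    by (simp add: power_mult_distrib flip: inverse_mult_distrib)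
  then have "(2 * q)\<^sup>2 < 4 * (A * B)"
    by (simp add: power2_eq_square)
  also have "\<dots> \<le> (A + B)\<^sup>2"
    using zero_le_power2[of "A - B"] by (simp add: power2_eq_square algebra_simps)
  finally have "(2 * q)\<^sup>2 < (A + B)\<^sup>2" .
  then show ?thesis
    using pos power_less_imp_less_base[of "2 * q" 2 "A + B"] unfolding A_B_q_def by simp
qed

lemma inverse_power_midpoint_rule_less:
  fixes c h :: real
  assumes "0 < h" "h < c" "n \<ge> 1"
  shows "2 * h * inverse (c ^ Suc n) < (inverse ((c - h) ^ n) - inverse ((c + h) ^ n)) / n"
  \<comment> \<open>the right-hand side is \<open>\<integral>[c-h, c+h] u^-(n+1) du\<close>\<close>
proof -
  define \<phi> where
    "\<phi> t = inverse ((c - t) ^ n) - inverse ((c + t) ^ n) - 2 * n * t * inverse (c ^ Suc n)" for t :: real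
  have "\<phi> 0 < \<phi> h"
  proof (rule DERIV_pos_imp_increasing_open[OF assms(1)])
    fix t assume t: "0 < t" "t < h"
    define A B q where "A = inverse ((c - t) ^ Suc n)" "B = inverse ((c + t) ^ Suc n)"
      "q = inverse (c ^ Suc n)"
    have "((\<lambda>t. inverse ((c - t) ^ n)) has_real_derivative n * A) (at t)"
      using t assms unfolding A_B_q_def
      by (intro DERIV_cong[OF has_real_derivative_inverse_power]) (auto intro!: derivative_eq_intros)
    moreover have "((\<lambda>t. inverse ((c + t) ^ n)) has_real_derivative - n * B) (at t)"
      using t assms unfolding A_B_q_def
      by (intro DERIV_cong[OF has_real_derivative_inverse_power]) (auto intro!: derivative_eq_intros)
    moreover have "((\<lambda>t. 2 * n * t * inverse (c ^ Suc n)) has_real_derivative 2 * n * q) (at t)"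
      unfolding A_B_q_def by (auto intro!: derivative_eq_intros)
    ultimately have "(\<phi> has_real_derivative n * A - - n * B - 2 * n * q) (at t)"
      unfolding \<phi>_def by (intro DERIV_diff)
    moreover have "0 < n * A - - n * B - 2 * n * q"
    proof -
      have "0 < n * (A + B - 2 * q)"
        using inverse_power_midpoint_less[of t c "Suc n"] t assms unfolding A_B_q_def
        by (intro mult_pos_pos) auto
      then show ?thesis by (simp add: algebra_simps)
    qed
    ultimately show "\<exists>y. (\<phi> has_real_derivative y) (at t) \<and> 0 < y" by blast
  qed (use assms in \<open>auto simp: \<phi>_def intro!: continuous_intros\<close>)
  then show ?thesis
    using assms by (simp add: \<phi>_def field_simps)
qed

lemma inverse_power_telescope_sums:
  fixes c :: real
  assumes "c > 0" "n \<ge> 1"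
  shows "(\<lambda>k. (inverse ((c + k) ^ n) - inverse ((c + k + 1) ^ n)) / n) sums (inverse (c ^ n) / n)"
proof -
  have "(\<lambda>k. inverse (c + real k)) \<longlonglongrightarrow> 0"
    by (intro tendsto_inverse_0_at_top
        filterlim_tendsto_add_at_top[OF tendsto_const filterlim_real_sequentially])
  then have "(\<lambda>k. inverse (c + real k) ^ n) \<longlonglongrightarrow> 0"
    using tendsto_power[of _ 0 _ n] assms by (simp add: power_0_left)
  then have "(\<lambda>k. inverse (c + real k) ^ n / n) \<longlonglongrightarrow> 0"
    by (rule tendsto_divide_zero)
  from telescope_sums'[OF this] show ?thesis
    by (simp add: diff_divide_distrib add_ac power_inverse)
qed

definition inv_pow_integral :: "real \<Rightarrow> nat \<Rightarrow> real" where
  "inv_pow_integral a m = integral {a..a + 1} (\<lambda>u. inverse (u ^ m))"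

lemma has_integral_inv_pow_integral:
  "a > 0 \<Longrightarrow> ((\<lambda>u. inverse (u ^ m)) has_integral inv_pow_integral a m) {a..a + 1}"
  unfolding inv_pow_integral_def
  by (intro integrable_integral integrable_continuous_interval continuous_intros) auto

lemma inv_pow_integral_0 [simp]: "inv_pow_integral a 0 = 1"
  by (simp add: inv_pow_integral_def)

lemma inv_pow_integral_pos:
  assumes "a > 0"
  shows "inv_pow_integral a m > 0"
proof -
  have "integral {a..a + 1} (\<lambda>_. 0) < integral {a..a + 1} (\<lambda>u. inverse (u ^ m))"
    by (rule integral_less_real) (use assms in \<open>auto intro!: continuous_intros\<close>)
  then show ?thesis
    by (simp add: inv_pow_integral_def)
qed

lemma inv_pow_integral_Suc:
  assumes "a > 0" "k \<ge> 1"
  shows "inv_pow_integral a (Suc k) = (inverse (a ^ k) - inverse ((a + 1) ^ k)) / k"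
proof -
  define G where "G u = - inverse (u ^ k) / k" for u :: real
  have "((\<lambda>u. inverse (u ^ Suc k)) has_integral G (a + 1) - G a) {a..a + 1}"
  proof (rule fundamental_theorem_of_calculus)
    fix u assume "u \<in> {a..a + 1}"
    with assms have "(G has_real_derivative inverse (u ^ Suc k)) (at u within {a..a + 1})"
      unfolding G_def
      by (intro DERIV_cong[OF DERIV_cdivide[OF DERIV_minus[OF
            has_real_derivative_inverse_power[OF DERIV_ident]]]]) auto
    then show "(G has_vector_derivative inverse (u ^ Suc k)) (at u within {a..a + 1})"
      by (simp add: has_real_derivative_iff_has_vector_derivative)
  qed (use assms in simp)
  then have "inv_pow_integral a (Suc k) = G (a + 1) - G a"
    using has_integral_unique[OF has_integral_inv_pow_integral[OF assms(1)]] by blast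
  then show ?thesis
    by (simp add: G_def diff_divide_distrib)
qed

lemma has_real_derivative_inv_pow_integral:
  assumes "a > 0" "k \<ge> 1"
  shows "((\<lambda>a. inv_pow_integral a (Suc k)) has_real_derivative
           - (Suc k * inv_pow_integral a (Suc (Suc k)))) (at a)"
proof (rule has_field_derivative_transform_within_open[where S = "{0<..}"])
  have "((\<lambda>a. (inverse (a ^ k) - inverse ((a + 1) ^ k)) / k) has_real_derivative
      (- (k * inverse (a ^ Suc k) * 1) - - (k * inverse ((a + 1) ^ Suc k) * (1 + 0))) / k) (at a)"
    using assms
    by (intro DERIV_cdivide DERIV_diff has_real_derivative_inverse_power
        DERIV_add DERIV_ident DERIV_const) auto
  moreover have "(- (k * inverse (a ^ Suc k) * 1) - - (k * inverse ((a + 1) ^ Suc k) * (1 + 0))) / k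
      = - (inverse (a ^ Suc k) - inverse ((a + 1) ^ Suc k))"
    using assms by (simp add: right_diff_distrib[symmetric])
  moreover have
    "inverse (a ^ Suc k) - inverse ((a + 1) ^ Suc k) = Suc k * inv_pow_integral a (Suc (Suc k))"
    using assms inv_pow_integral_Suc[of a "Suc k"] by simp
  ultimately show "((\<lambda>a. (inverse (a ^ k) - inverse ((a + 1) ^ k)) / k) has_real_derivative
      - (Suc k * inv_pow_integral a (Suc (Suc k)))) (at a)"
    by (simp only:)
qed (use assms inv_pow_integral_Suc in auto)

lemma inv_pow_integral_log_convex:
  assumes "a > 0"
  shows "inv_pow_integral a (Suc m) ^ 2 < inv_pow_integral a m * inv_pow_integral a (Suc (Suc m))"
proof -
  define A B C where "A = inv_pow_integral a m" "B = inv_pow_integral a (Suc m)"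
    "C = inv_pow_integral a (Suc (Suc m))"
  txt \<open>Strict Cauchy--Schwarz: \<open>l u - 1\<close> cannot vanish at both ends of \<open>[a, a+1]\<close>.\<close>
  define l where "l = B / A"
  define g where "g u = inverse (u ^ Suc (Suc m)) * (l * u - 1)\<^sup>2" for u :: real
  have A: "A > 0"
    using assms inv_pow_integral_pos unfolding A_B_C_def by blast
  have combination_integral:
    "((\<lambda>u. l\<^sup>2 * inverse (u ^ m) - 2 * l * inverse (u ^ Suc m) + inverse (u ^ Suc (Suc m)))
      has_integral l\<^sup>2 * A - 2 * l * B + C) {a..a + 1}"
    unfolding A_B_C_def
    by (intro has_integral_add has_integral_diff has_integral_mult_right
        has_integral_inv_pow_integral assms)
  have "l\<^sup>2 * inverse (u ^ m) - 2 * l * inverse (u ^ Suc m) + inverse (u ^ Suc (Suc m)) = g u"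
    if "u \<in> {a..a + 1}" for u
    using that assms by (simp add: g_def field_simps power2_eq_square)
  from has_integral_eq[OF this combination_integral]
  have g_integral: "(g has_integral l\<^sup>2 * A - 2 * l * B + C) {a..a + 1}" .
  have g_nonneg: "g u \<ge> 0" if "u \<in> {a..a + 1}" for u
    using that assms by (simp add: g_def)
  then have "l\<^sup>2 * A - 2 * l * B + C \<ge> 0"
    using g_integral has_integral_nonneg by blast
  moreover have "l\<^sup>2 * A - 2 * l * B + C \<noteq> 0"
  proof
    assume "l\<^sup>2 * A - 2 * l * B + C = 0"
    moreover have "continuous_on {a..a + 1} g"
      using assms unfolding g_def by (intro continuous_intros) auto
    ultimately have "g u = 0" if "u \<in> {a..a + 1}" for u
      using has_integral_0_cbox_imp_0[of a "a + 1" g u] g_integral g_nonneg that by auto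
    then have "l * a = 1" "l * (a + 1) = 1"
      using assms by (auto simp: g_def)
    then show False
      by (simp add: algebra_simps)
  qed
  ultimately have "0 < l\<^sup>2 * A - 2 * l * B + C" by linarith
  then show ?thesis
    using A unfolding l_def A_B_C_def[symmetric] by (simp add: field_simps power2_eq_square)
qed

lemma inv_pow_integral_power_less:
  assumes "a > 0" "m \<ge> 1"
  shows "inv_pow_integral a m ^ Suc m < inv_pow_integral a (Suc m) ^ m"
proof -
  have induction_step:
    "inv_pow_integral a (Suc m) ^ Suc (Suc m) < inv_pow_integral a (Suc (Suc m)) ^ Suc m"
    if "inv_pow_integral a m ^ Suc m \<le> inv_pow_integral a (Suc m) ^ m" for m
  proof -
    define A B C where "A = inv_pow_integral a m" "B = inv_pow_integral a (Suc m)"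
      "C = inv_pow_integral a (Suc (Suc m))"
    have pos: "A > 0" "B > 0" "C > 0"
      using assms inv_pow_integral_pos unfolding A_B_C_def by auto
    have "B ^ m * B ^ Suc (Suc m) = (B\<^sup>2) ^ Suc m"
      by (simp flip: power_add power_mult add: mult_2)
    also have "\<dots> < (A * C) ^ Suc m"
      using inv_pow_integral_log_convex[OF assms(1), of m] pos unfolding A_B_C_def
      by (intro power_strict_mono) auto
    also have "\<dots> = A ^ Suc m * C ^ Suc m"
      by (simp add: power_mult_distrib)
    also have "\<dots> \<le> B ^ m * C ^ Suc m"
      using that pos unfolding A_B_C_def by (intro mult_right_mono) auto
    finally show ?thesis
      using pos unfolding A_B_C_def by simp
  qed
  from assms(2) show ?thesis
  proof (induction m rule: dec_induct)
    case base
    show ?case using induction_step[of 0] by simp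
  next
    case (step m)
    then show ?case using induction_step[of m] by simp
  qed
qed

definition inv_power_mean :: "nat \<Rightarrow> real \<Rightarrow> real" where
  "inv_power_mean n a = inv_pow_integral a (Suc n) powr (- (1 / (real n + 1)))"

lemma inv_power_mean_pos:
  assumes "a > 0"
  shows "inv_power_mean n a > 0"
  using inv_pow_integral_pos[OF assms, of "Suc n"] by (simp add: inv_power_mean_def)

lemma inverse_inv_power_mean_power:
  assumes "a > 0"
  shows "inverse (inv_power_mean n a ^ Suc n) = inv_pow_integral a (Suc n)"
proof -
  have "inv_power_mean n a ^ Suc n = inv_power_mean n a powr Suc n"
    by (rule powr_realpow[symmetric, OF inv_power_mean_pos[OF assms]])
  also have "\<dots> = inv_pow_integral a (Suc n) powr (- (1 / (real n + 1)) * Suc n)"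
    by (simp add: inv_power_mean_def powr_powr)
  also have "- (1 / (real n + 1)) * Suc n = - 1"
    by (simp add: field_simps)
  also have "inv_pow_integral a (Suc n) powr - 1 = inverse (inv_pow_integral a (Suc n))"
    using inv_pow_integral_pos[OF assms, of "Suc n"] by (simp add: powr_minus)
  finally show ?thesis by simp
qed

lemma inv_power_mean_minus_id_has_pos_derivative:
  assumes "a > 0" "n \<ge> 1"
  shows "\<exists>y. ((\<lambda>a. inv_power_mean n a - a) has_real_derivative y) (at a) \<and> y > 0"
proof -
  define I K where "I = inv_pow_integral a (Suc n)" "K = inv_pow_integral a (Suc (Suc n))"
  define Q where "Q = I powr ((real n + 2) / (real n + 1))"
  have pos: "I > 0" "K > 0"
    using inv_pow_integral_pos[OF assms(1)] unfolding I_K_def by auto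
  then have "Q > 0"
    by (simp add: Q_def)
  have "Q ^ Suc n = Q powr Suc n"
    by (rule powr_realpow[symmetric, OF \<open>Q > 0\<close>])
  also have "\<dots> = I powr ((real n + 2) / (real n + 1) * Suc n)"
    by (simp add: Q_def powr_powr)
  also have "(real n + 2) / (real n + 1) * Suc n = Suc (Suc n)"
    by (simp add: field_simps)
  also have "I powr Suc (Suc n) = I ^ Suc (Suc n)"
    by (rule powr_realpow[OF \<open>I > 0\<close>])
  also have "\<dots> < K ^ Suc n"
    using inv_pow_integral_power_less[OF assms(1), of "Suc n"] unfolding I_K_def by simp
  finally have "Q < K"
    using pos power_less_imp_less_base[of Q "Suc n" K] by simp
  have "((\<lambda>a. inv_power_mean n a - a) has_real_derivative
      - (1 / (real n + 1)) * I powr (- (1 / (real n + 1)) - 1) * - (Suc n * K) - 1) (at a)"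
    unfolding inv_power_mean_def I_K_def using assms inv_pow_integral_pos[OF assms(1)]
    by (auto intro!: derivative_eq_intros has_real_derivative_inv_pow_integral)
  moreover have "- (1 / (real n + 1)) * I powr (- (1 / (real n + 1)) - 1) * - (Suc n * K) - 1
      = K / Q - 1"
  proof -
    have "- (1 / (real n + 1)) - 1 = - ((real n + 2) / (real n + 1))"
      by (simp add: field_simps)
    then have "I powr (- (1 / (real n + 1)) - 1) = inverse Q"
      by (simp add: Q_def powr_minus)
    then show ?thesis
      using \<open>Q > 0\<close> by (simp add: field_simps)
  qed
  moreover have "K / Q - 1 > 0"
    using \<open>Q < K\<close> \<open>Q > 0\<close> by simp
  ultimately show ?thesis by auto
qed

lemma inv_power_mean_add_one:
  assumes "a > 0" "n \<ge> 1"
  shows "inv_power_mean n a + 1 < inv_power_mean n (a + 1)"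
proof -
  have "inv_power_mean n a - a < inv_power_mean n (a + 1) - (a + 1)"
    by (rule DERIV_pos_imp_increasing)
      (use assms inv_power_mean_minus_id_has_pos_derivative in force)+
  then show ?thesis by simp
qed

lemma inv_power_mean_add_nat:
  fixes k :: nat
  assumes "a > 0" "n \<ge> 1"
  shows "inv_power_mean n a + k \<le> inv_power_mean n (a + k)"
proof (induction k)
  case (Suc k)
  have "inv_power_mean n (a + k) + 1 < inv_power_mean n (a + k + 1)"
    using assms by (intro inv_power_mean_add_one) auto
  with Suc.IH show ?case by (simp add: add_ac)
qed simp

lemma sums_less:
  fixes f g :: "nat \<Rightarrow> real"
  assumes "f sums a" "g sums b" "\<And>k. f k \<le> g k" "f j < g j"
  shows "a < b"
proof -
  have "(\<lambda>k. g k - f k) sums (b - a)"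
    using assms by (intro sums_diff)
  moreover have "0 < (\<Sum>k. g k - f k)"
    using assms calculation by (intro suminf_pos2[of _ j]) (auto simp: sums_iff)
  ultimately show ?thesis
    by (simp add: sums_iff)
qed

definition signed_Polygamma :: "nat \<Rightarrow> real \<Rightarrow> real" where
  "signed_Polygamma n t = (-1) ^ (n - 1) * Polygamma n t"

lemma signed_Polygamma_sums:
  fixes t :: real
  assumes "t > 0" "n \<ge> 1"
  shows "(\<lambda>k. inverse ((t + k) ^ Suc n)) sums (signed_Polygamma n t / fact n)"
proof -
  have "(-1::real) ^ Suc n = (-1) ^ (n - 1)"
    using assms by (cases n) auto
  then show ?thesis
    using Polygamma_LIMSEQ[of t n] assms by (simp add: signed_Polygamma_def)
qed

lemma signed_Polygamma_strict_antimono: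
  assumes "0 < s" "s < t" "n \<ge> 1"
  shows "signed_Polygamma n t < signed_Polygamma n s"
proof -
  have "signed_Polygamma n t / fact n < signed_Polygamma n s / fact n"
  proof (rule sums_less[OF signed_Polygamma_sums signed_Polygamma_sums, where j = 0])
    show "inverse ((t + real k) ^ Suc n) \<le> inverse ((s + real k) ^ Suc n)" for k
      using assms by (intro le_imp_inverse_le power_mono) auto
    show "inverse ((t + real 0) ^ Suc n) < inverse ((s + real 0) ^ Suc n)"
      using assms by (intro less_imp_inverse_less power_strict_mono) auto
  qed (use assms in auto)
  then show ?thesis
    by (simp add: divide_less_cancel)
qed

lemma continuous_on_signed_Polygamma: "continuous_on {0<..} (signed_Polygamma n)"
  unfolding signed_Polygamma_def
  by (intro continuous_intros continuous_on_Polygamma) (auto elim!: nonpos_Ints_cases)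

lemma signed_Polygamma_less:
  assumes "s > 1/2" "n \<ge> 1"
  shows "signed_Polygamma n s < fact (n - 1) / (s - 1/2) ^ n"
proof -
  have "signed_Polygamma n s / fact n < inverse ((s - 1/2) ^ n) / n"
  proof (rule sums_less[OF signed_Polygamma_sums, where j = 0])
    show "(\<lambda>k. (inverse ((s + k - 1/2) ^ n) - inverse ((s + k + 1/2) ^ n)) / n) sums
        (inverse ((s - 1/2) ^ n) / n)"
      using inverse_power_telescope_sums[of "s - 1/2" n] assms by (simp add: algebra_simps)
    show "inverse ((s + k) ^ Suc n) \<le> (inverse ((s + k - 1/2) ^ n) - inverse ((s + k + 1/2) ^ n)) / n"
      for k :: nat
      using inverse_power_midpoint_rule_less[of "1/2" "s + k" n] assms by simp
  qed (use inverse_power_midpoint_rule_less[of "1/2" s n] assms in auto)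
  then have "signed_Polygamma n s < fact n * (inverse ((s - 1/2) ^ n) / n)"
    by (simp add: pos_divide_less_eq mult.commute)
  also have "\<dots> = fact (n - 1) / (s - 1/2) ^ n"
    using assms by (simp add: fact_reduce[of n] field_simps)
  finally show ?thesis .
qed

lemma signed_Polygamma_inv_power_mean_greater:
  assumes "a > 0" "n \<ge> 1"
  shows "fact (n - 1) / a ^ n < signed_Polygamma n (inv_power_mean n a)"
proof -
  define \<eta> where "\<eta> = inv_power_mean n a"
  have "\<eta> > 0"
    using inv_power_mean_pos[OF assms(1)] by (simp add: \<eta>_def)
  have bound: "inverse (inv_power_mean n (a + k) ^ Suc n) \<le> inverse ((\<eta> + k) ^ Suc n)" for k :: nat
    using inv_power_mean_add_nat[OF assms, of k] \<open>\<eta> > 0\<close> unfolding \<eta>_def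
    by (intro le_imp_inverse_le power_mono) auto
  have "inverse (a ^ n) / n < signed_Polygamma n \<eta> / fact n"
  proof (rule sums_less[OF _ signed_Polygamma_sums, where j = 1])
    have "inverse (inv_power_mean n (a + k) ^ Suc n)
        = (inverse ((a + k) ^ n) - inverse ((a + k + 1) ^ n)) / n" for k :: nat
      using inverse_inv_power_mean_power[of "a + k" n] inv_pow_integral_Suc[of "a + k" n] assms
      by simp
    then show "(\<lambda>k. inverse (inv_power_mean n (a + k) ^ Suc n)) sums (inverse (a ^ n) / n)"
      using inverse_power_telescope_sums[OF assms] by (simp only:)
    show "inverse (inv_power_mean n (a + real 1) ^ Suc n) < inverse ((\<eta> + real 1) ^ Suc n)"
      using inv_power_mean_add_one[OF assms] \<open>\<eta> > 0\<close> unfolding \<eta>_def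
      by (intro less_imp_inverse_less power_strict_mono) auto
  qed (use bound \<open>\<eta> > 0\<close> assms in auto)
  then have "fact n * (inverse (a ^ n) / n) < signed_Polygamma n \<eta>"
    by (simp add: pos_less_divide_eq mult.commute)
  moreover have "fact n * (inverse (a ^ n) / n) = fact (n - 1) / a ^ n"
    using assms by (simp add: fact_reduce[of n] field_simps)
  ultimately show ?thesis
    by (simp add: \<eta>_def)
qed

lemma inj_on_signed_Polygamma:
  assumes "n \<ge> 1"
  shows "inj_on (signed_Polygamma n) {0<..}"
  by (rule inj_onI)
    (metis assms greaterThan_iff less_irrefl linorder_neqE_linordered_idom
      signed_Polygamma_strict_antimono)

lemma polygamma_inv_between:
  assumes "0 < a" "0 < b" "n \<ge> 1"
    and "signed_Polygamma n b < x" "x < signed_Polygamma n a"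
  shows "a < polygamma_inv n x \<and> polygamma_inv n x < b"
proof -
  have "a < b"
    using assms signed_Polygamma_strict_antimono[of b a n] by (cases a b rule: linorder_cases) auto
  moreover have "continuous_on {a..b} (signed_Polygamma n)"
    using continuous_on_signed_Polygamma by (rule continuous_on_subset) (use assms in auto)
  ultimately obtain t where t: "a \<le> t" "t \<le> b" "signed_Polygamma n t = x"
    using IVT2'[of "signed_Polygamma n" b x a] assms by auto
  have "polygamma_inv n x = t"
  proof -
    have "signed_Polygamma n = (\<lambda>t. (-1) ^ (n - 1) * Polygamma n t)"
      by (simp add: signed_Polygamma_def fun_eq_iff)
    then show ?thesis
      using the_inv_into_f_eq[OF inj_on_signed_Polygamma[OF assms(3)], of t x] t assms
      by (simp add: polygamma_inv_def)
  qed
  moreover have "t \<noteq> a" "t \<noteq> b"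
    using t assms by auto
  ultimately show ?thesis
    using t by auto
qed

theorem theorem2p1:
  fixes n :: nat and x :: real
  assumes "n \<ge> 1" and "x > 0"
  shows "((1 / real n) * (x / fact (n - 1)
            - ((fact (n - 1) / x) powr (1 / real n) + 1) powr (- real n)))
           powr (- (1 / (real n + 1)))
         < polygamma_inv n x
       \<and> polygamma_inv n x < (fact (n - 1) / x) powr (1 / real n) + 1 / 2"
proof -
  define s where "s = (fact (n - 1) / x) powr (1 / real n)"
  have "s > 0"
    using assms by (simp add: s_def)
  have "s ^ n = fact (n - 1) / x"
    using assms by (simp add: s_def powr_power)
  then have x_eq: "x = fact (n - 1) / s ^ n"
    using assms \<open>s > 0\<close> by (simp add: field_simps)
  have "(1 / real n) * (x / fact (n - 1) - (s + 1) powr (- real n)) = inv_pow_integral s (Suc n)"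
    using assms \<open>s > 0\<close>
    by (simp add: x_eq inv_pow_integral_Suc powr_minus powr_realpow divide_inverse)
  then have lower_eq: "((1 / real n) * (x / fact (n - 1) - (s + 1) powr (- real n)))
      powr (- (1 / (real n + 1))) = inv_power_mean n s"
    by (simp add: inv_power_mean_def)
  have "signed_Polygamma n (s + 1/2) < x"
    using signed_Polygamma_less[of "s + 1/2" n] \<open>s > 0\<close> assms by (simp add: x_eq)
  moreover have "x < signed_Polygamma n (inv_power_mean n s)"
    using signed_Polygamma_inv_power_mean_greater[OF \<open>s > 0\<close> assms(1)] by (simp add: x_eq)
  ultimately show ?thesis
    unfolding s_def[symmetric] lower_eq
    using \<open>s > 0\<close> assms
    by (intro polygamma_inv_between inv_power_mean_pos) auto
qed

end
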